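(* Let $M\in\{0,1\}^{m\times n}$ be the vertex-edge incidence matrix of a simple graph, and let $c\in\mathbb Z^n$. Define $f_{c,M}\colon\mathbb Z^m\to\mathbb Z\cup\{\infty\}$ by \[ f_{c,M}(z)=\min\{c^\top x\mid Mx=z,\ x\in\mathbb Z^n_{\ge0}\}, \] with $f_{c,M}(z)=\infty$ if no such $x$ exists. Then $f_{c,M}$ is SBO jump M-convex.
   Context: $f_{c,M}(z)$ is the minimum cost of a perfect $z$-matching of the graph. For $x,y\in\mathbb Z^m$, write $x\sqsubseteq y$ if $|x_i|\le|y_i|$ and $x_iy_i\ge0$ for all $i$. A $2$-step decomposition of $d\in\mathbb Z^m$ is a multiset of vectors $p^{(1)},\dots,p^{(\ell)}\in\mathbb Z^m$ satisfying: - $\|p^{(k)}\|_1=2$ and $p^{(k)}\sqsubseteq d$ for every $k$; - $d=\sum_k p^{(k)}$. A function $f\colon\mathbb Z^m\to\mathbb Q\cup\{\infty\}$ is SBO jump M-convex if the following holds for every two points $z^{(1)},z^{(2)}$ with $f(z^{(1)}),f(z^{(2)})<\infty$. There must exist a $2$-step decomposition $p^{(1)},\dots,p^{(\ell)}$ of $z^{(2)}-z^{(1)}$ and reals $g^{(1)},\dots,g^{(\ell)}$ such that: - $f(z^{(2)})=f(z^{(1)})+\sum_{k\in[\ell]}g^{(k)}$; - for every $I\subseteq[\ell]$, $f\bigl(z^{(1)}+\sum_{k\in I}p^{(k)}\bigr)\le f(z^{(1)})+\sum_{k\in I}g^{(k)}$. *)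

theory Defs
  imports "HOL-Analysis.Analysis"
begin

text \<open>Vectors in Z^m are represented as functions nat => int vanishing outside {0..<m}.\<close>
definition zvec :: "nat \<Rightarrow> (nat \<Rightarrow> int) set" where
  "zvec m = {z. \<forall>i\<ge>m. z i = 0}"

definition conf_le :: "(nat \<Rightarrow> int) \<Rightarrow> (nat \<Rightarrow> int) \<Rightarrow> bool" where
  "conf_le x y \<longleftrightarrow> (\<forall>i. \<bar>x i\<bar> \<le> \<bar>y i\<bar> \<and> x i * y i \<ge> 0)"

definition l1norm :: "nat \<Rightarrow> (nat \<Rightarrow> int) \<Rightarrow> int" where
  "l1norm m p = (\<Sum>i<m. \<bar>p i\<bar>)"

definition two_step_decomp :: "nat \<Rightarrow> (nat \<Rightarrow> int) \<Rightarrow> (nat \<Rightarrow> int) list \<Rightarrow> bool" where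
  "two_step_decomp m d ps \<longleftrightarrow>
     (\<forall>p\<in>set ps. p \<in> zvec m \<and> l1norm m p = 2 \<and> conf_le p d) \<and>
     (\<forall>i. d i = (\<Sum>k<length ps. (ps ! k) i))"

definition sbo_jump_mconvex :: "nat \<Rightarrow> ((nat \<Rightarrow> int) \<Rightarrow> ereal) \<Rightarrow> bool" where
  "sbo_jump_mconvex m f \<longleftrightarrow>
     (\<forall>z1\<in>zvec m. \<forall>z2\<in>zvec m. f z1 < \<infinity> \<longrightarrow> f z2 < \<infinity> \<longrightarrow>
        (\<exists>ps gs. two_step_decomp m (\<lambda>i. z2 i - z1 i) ps \<and> length gs = length ps \<and>
           f z2 = f z1 + ereal (\<Sum>k<length ps. gs ! k) \<and>
           (\<forall>I\<subseteq>{..<length ps}.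
              f (\<lambda>i. z1 i + (\<Sum>k\<in>I. (ps ! k) i)) \<le> f z1 + ereal (\<Sum>k\<in>I. gs ! k))))"

text \<open>M (rows 0..<m = vertices, columns 0..<n = edges) is the vertex-edge incidence
  matrix of a simple graph: 0/1 entries, every column has exactly two ones (no loops),
  and columns are pairwise distinct (no parallel edges).\<close>
definition simple_graph_incidence :: "nat \<Rightarrow> nat \<Rightarrow> (nat \<Rightarrow> nat \<Rightarrow> int) \<Rightarrow> bool" where
  "simple_graph_incidence m n M \<longleftrightarrow>
     (\<forall>i<m. \<forall>j<n. M i j = 0 \<or> M i j = 1) \<and>
     (\<forall>j<n. card {i. i < m \<and> M i j = 1} = 2) \<and>
     (\<forall>j<n. \<forall>j'<n. j \<noteq> j' \<longrightarrow> (\<exists>i<m. M i j \<noteq> M i j'))"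

definition feasible :: "nat \<Rightarrow> nat \<Rightarrow> (nat \<Rightarrow> nat \<Rightarrow> int) \<Rightarrow> (nat \<Rightarrow> int) \<Rightarrow> (nat \<Rightarrow> int) set" where
  "feasible m n M z = {x. (\<forall>j<n. x j \<ge> 0) \<and> (\<forall>j\<ge>n. x j = 0) \<and>
                          (\<forall>i<m. (\<Sum>j<n. M i j * x j) = z i)}"

definition fcM :: "nat \<Rightarrow> nat \<Rightarrow> (nat \<Rightarrow> int) \<Rightarrow> (nat \<Rightarrow> nat \<Rightarrow> int) \<Rightarrow> (nat \<Rightarrow> int) \<Rightarrow> ereal" where
  "fcM m n c M z =
     (let S = (\<lambda>x. \<Sum>j<n. c j * x j) ` feasible m n M z in
      if S = {} then \<infinity> else ereal (real_of_int (Min S)))"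

end

theory Submission
  imports Defs "HOL-Library.Function_Algebras"
begin

text \<open>Take optimal solutions \<open>x1\<close>, \<open>x2\<close> for \<open>z1\<close>, \<open>z2\<close> and write \<open>x2 - x1\<close> as a sum of
  signed unit vectors on edges; their images under \<open>M\<close> are signed columns of norm 2. Regroup
  greedily: whenever two images have opposite signs at some vertex, merge them; the merged image has
  even norm at most 2. The final images are pairwise sign-consistent, hence conformal to \<open>z2 - z1\<close>,
  and their edge parts all have the sign pattern of \<open>x2 - x1\<close>. So adding any subfamily of edge
  parts to \<open>x1\<close> gives a feasible solution for the correspondingly shifted \<open>z1\<close>, and taking the
  costs of the edge parts as the \<open>g\<close>'s gives the required inequalities; for the whole family the
  edge parts sum to \<open>x2 - x1\<close>, which gives the equality.\<close>

lemma sum_list_apply: "sum_list xs i = (\<Sum>x\<leftarrow>xs. x i)"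
  by (induction xs) simp_all

lemma sum_apply: "sum f A i = (\<Sum>a\<in>A. f a i)"
  by (induction A rule: infinite_finite_induct) simp_all

lemma l1norm_nonneg: "0 \<le> l1norm m p"
  by (simp add: l1norm_def sum_nonneg)

lemma l1norm_eq_0_imp_zero:
  assumes "p \<in> zvec m" "l1norm m p = 0"
  shows "p = 0"
proof
  fix i show "p i = 0 i"
  proof (cases "i < m")
    case True
    have "\<bar>p i\<bar> \<le> l1norm m p"
      unfolding l1norm_def by (rule member_le_sum) (use True in auto)
    then show ?thesis using assms by simp
  qed (use assms in \<open>simp add: zvec_def\<close>)
qed

lemma even_l1norm_iff: "even (l1norm m p) \<longleftrightarrow> even (\<Sum>i<m. p i)"
proof -
  have "l1norm m p = (\<Sum>i<m. p i) + (\<Sum>i<m. \<bar>p i\<bar> - p i)"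
    by (simp add: l1norm_def sum_subtractf)
  moreover have "even (\<Sum>i<m. \<bar>p i\<bar> - p i)"
    by (rule dvd_sum) (auto simp: abs_if)
  ultimately show ?thesis by simp
qed

lemma l1norm_add_le_if_opposite_signs:
  assumes "p i * q i < 0" "i < m"
  shows "l1norm m (p + q) \<le> l1norm m p + l1norm m q - 2"
proof -
  have "l1norm m (p + q) \<le> (\<Sum>k<m. \<bar>p k\<bar> + \<bar>q k\<bar> - (if k = i then 2 else 0))"
    unfolding l1norm_def
  proof (rule sum_mono)
    fix k
    show "\<bar>(p + q) k\<bar> \<le> \<bar>p k\<bar> + \<bar>q k\<bar> - (if k = i then 2 else 0)"
      using assms(1) by (cases "k = i") (auto simp: abs_if mult_less_0_iff)
  qed
  also have "\<dots> = l1norm m p + l1norm m q - 2"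
    using assms(2) by (simp add: l1norm_def sum_subtractf sum.distrib)
  finally show ?thesis .
qed

lemma l1norm_add_opposite_two_steps:
  assumes "p \<in> zvec m" "l1norm m p = 2" "l1norm m q = 2" "p i * q i < 0"
  shows "l1norm m (p + q) \<in> {0, 2}"
proof -
  have "i < m"
    using assms(1,4) by (auto simp: zvec_def intro: ccontr)
  then have "l1norm m (p + q) \<le> 2"
    using l1norm_add_le_if_opposite_signs[of p i q m, OF assms(4)] assms(2,3) by simp
  moreover have "even (l1norm m (p + q))"
    using assms(2,3) even_l1norm_iff[of m p] even_l1norm_iff[of m q]
    by (simp add: even_l1norm_iff sum.distrib)
  ultimately have "l1norm m (p + q) = 0 \<or> l1norm m (p + q) = 2"
    using l1norm_nonneg[of m "p + q"] by presburger
  then show ?thesis by simp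
qed

definition sign_consistent :: "(nat \<Rightarrow> int) \<Rightarrow> (nat \<Rightarrow> int) \<Rightarrow> bool" where
  "sign_consistent p q \<longleftrightarrow> (\<forall>i. 0 \<le> p i * q i)"

lemma pairwise_sign_consistentD:
  assumes "pairwise sign_consistent A" "p \<in> A" "q \<in> A"
  shows "0 \<le> p i * q i"
  using assms by (cases "p = q") (auto simp: pairwise_def sign_consistent_def)

lemma abs_le_abs_sum_list_same_sign:
  fixes xs :: "'a::linordered_idom list"
  assumes same_sign: "\<forall>a\<in>set xs. \<forall>b\<in>set xs. 0 \<le> a * b" and x: "x \<in> set xs"
  shows "\<bar>x\<bar> \<le> \<bar>sum_list xs\<bar> \<and> 0 \<le> x * sum_list xs"
proof -
  have split: "sum_list xs = x + sum_list (remove1 x xs)"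
    using sum_list_map_remove1[OF x, of id] by simp
  have rest: "\<forall>b\<in>set (remove1 x xs). 0 \<le> x * b"
    using same_sign x set_remove1_subset[of x xs] by blast
  consider "0 < x" | "x < 0" | "x = 0" by linarith
  then show ?thesis
  proof cases
    case 1
    then have "0 \<le> sum_list (remove1 x xs)"
      using rest by (intro sum_list_nonneg) (auto simp: zero_le_mult_iff)
    then show ?thesis using 1 split by simp
  next
    case 2
    then have "sum_list (remove1 x xs) \<le> 0"
      using rest by (intro sum_list_nonpos) (auto simp: zero_le_mult_iff)
    then show ?thesis using 2 split by (simp add: mult_nonpos_nonpos)
  qed simp
qed

lemma conf_le_sum_list:
  assumes "pairwise sign_consistent (set ps)" "p \<in> set ps"
  shows "conf_le p (sum_list ps)"
  unfolding conf_le_def sum_list_apply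
proof
  fix i
  have "\<forall>a\<in>set (map (\<lambda>q. q i) ps). \<forall>b\<in>set (map (\<lambda>q. q i) ps). 0 \<le> a * b"
    using pairwise_sign_consistentD[OF assms(1)] by auto
  then show "\<bar>p i\<bar> \<le> \<bar>\<Sum>q\<leftarrow>ps. q i\<bar> \<and> 0 \<le> p i * (\<Sum>q\<leftarrow>ps. q i)"
    by (rule abs_le_abs_sum_list_same_sign) (use assms(2) in auto)
qed

definition consistent_two_steps :: "nat \<Rightarrow> ('a \<Rightarrow> nat \<Rightarrow> int) \<Rightarrow> 'a list \<Rightarrow> bool" where
  "consistent_two_steps m P rs \<longleftrightarrow>
     (\<forall>r\<in>set rs. P r \<in> zvec m \<and> l1norm m (P r) = 2) \<and> pairwise sign_consistent (P ` set rs)"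

lemma consistent_two_steps_subset:
  "consistent_two_steps m P rs \<Longrightarrow> set rs' \<subseteq> set rs \<Longrightarrow> consistent_two_steps m P rs'"
  unfolding consistent_two_steps_def by (meson image_mono pairwise_subset subsetD)

text \<open>A step of opposite sign to an existing step in some coordinate is merged with it; by parity
  the merged step has norm 2 again or norm 0, and steps of norm 0 are collected in \<open>w\<close>.\<close>
lemma consistent_two_steps_insert:
  fixes P :: "'a::comm_monoid_add \<Rightarrow> nat \<Rightarrow> int"
  assumes Q_add: "\<And>a b. Q a \<Longrightarrow> Q b \<Longrightarrow> Q (a + b)" and Q_0: "Q 0"
    and P_add: "\<And>a b. P (a + b) = P a + P b"
  shows "consistent_two_steps m P rs \<Longrightarrow> \<forall>r\<in>set rs. Q r \<Longrightarrow>
    Q s \<Longrightarrow> P s \<in> zvec m \<Longrightarrow> l1norm m (P s) \<in> {0, 2} \<Longrightarrow>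
    \<exists>rs' w. consistent_two_steps m P rs' \<and> (\<forall>r\<in>set rs'. Q r) \<and> Q w \<and> P w = 0 \<and>
      sum_list rs' + w = sum_list rs + s"
proof (induction "length rs" arbitrary: rs s rule: less_induct)
  case less
  note rs = less.prems(1,2) and s = less.prems(3,4,5)
  consider (zero) "l1norm m (P s) = 0"
    | (consistent) "l1norm m (P s) = 2" "\<forall>r\<in>set rs. sign_consistent (P s) (P r)"
    | (conflict) r i where "l1norm m (P s) = 2" "r \<in> set rs" "P s i * P r i < 0"
    using s(3) unfolding sign_consistent_def by (metis insert_iff singletonD not_le)
  then show ?case
  proof cases
    case zero
    then have "P s = 0" using s(2) by (rule l1norm_eq_0_imp_zero[rotated])
    then show ?thesis using rs s(1) by blast
  next
    case consistent
    have "P 0 = 0" using P_add[of 0 0] by simp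
    moreover have "consistent_two_steps m P (s # rs)"
      using rs(1) consistent s(2)
      by (auto simp: consistent_two_steps_def pairwise_insert sign_consistent_def mult.commute)
    ultimately show ?thesis using rs(2) s(1) Q_0 by (intro exI[of _ "s # rs"] exI[of _ 0]) (simp add: add.commute)
  next
    case conflict
    obtain xs ys where split: "rs = xs @ r # ys" using split_list[OF conflict(2)] by blast
    have r: "Q r" "P r \<in> zvec m" "l1norm m (P r) = 2"
      using rs conflict(2) by (auto simp: consistent_two_steps_def)
    have "consistent_two_steps m P (xs @ ys)"
      using rs(1) split by (auto intro: consistent_two_steps_subset)
    moreover have "Q (s + r)" "P (s + r) \<in> zvec m" "l1norm m (P (s + r)) \<in> {0, 2}"
      using Q_add[OF s(1) r(1)] s(2) r(2) l1norm_add_opposite_two_steps[OF s(2) conflict(1) r(3) conflict(3)]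
      by (auto simp: P_add zvec_def)
    ultimately obtain rs' w where "consistent_two_steps m P rs'" "\<forall>r\<in>set rs'. Q r" "Q w" "P w = 0"
      and sum: "sum_list rs' + w = sum_list (xs @ ys) + (s + r)"
      using less.hyps[of "xs @ ys" "s + r"] rs(2) split by auto
    moreover have "sum_list (xs @ ys) + (s + r) = sum_list rs + s"
      using split by (simp add: ac_simps)
    ultimately show ?thesis by metis
  qed
qed

lemma regroup_into_consistent_two_steps:
  fixes P :: "'a::comm_monoid_add \<Rightarrow> nat \<Rightarrow> int"
  assumes Q_add: "\<And>a b. Q a \<Longrightarrow> Q b \<Longrightarrow> Q (a + b)" and Q_0: "Q 0"
    and P_add: "\<And>a b. P (a + b) = P a + P b"
    and steps: "\<forall>s\<in>set L. Q s \<and> P s \<in> zvec m \<and> l1norm m (P s) = 2"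
  obtains rs w where "consistent_two_steps m P rs" "\<forall>r\<in>set rs. Q r" "Q w" "P w = 0"
    "sum_list rs + w = sum_list L"
proof -
  have "\<exists>rs w. consistent_two_steps m P rs \<and> (\<forall>r\<in>set rs. Q r) \<and> Q w \<and> P w = 0 \<and>
    sum_list rs + w = sum_list L"
    using steps
  proof (induction L)
    case Nil
    have "P 0 = 0" using P_add[of 0 0] by simp
    then show ?case using Q_0 by (intro exI[of _ "[]"] exI[of _ 0]) (simp add: consistent_two_steps_def)
  next
    case (Cons s L)
    then obtain rs0 w0 where rs0: "consistent_two_steps m P rs0" "\<forall>r\<in>set rs0. Q r" "Q w0" "P w0 = 0"
      and sum0: "sum_list rs0 + w0 = sum_list L"
      by (meson list.set_intros(2))
    obtain rs w where "consistent_two_steps m P rs" "\<forall>r\<in>set rs. Q r" "Q w" "P w = 0"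
      and sum: "sum_list rs + w = sum_list rs0 + s"
      using consistent_two_steps_insert[OF Q_add Q_0 P_add rs0(1,2), of s] Cons.prems by auto
    moreover have "sum_list rs + (w + w0) = sum_list (s # L)"
      using sum sum0 by (metis add.assoc add.commute sum_list.Cons)
    ultimately show ?case
      using rs0(3,4) Q_add by (intro exI[of _ rs] exI[of _ "w + w0"]) (simp add: P_add)
  qed
  then show ?thesis using that by blast
qed

lemma two_step_decomp_map:
  assumes "consistent_two_steps m P ys" "sum_list (map P ys) = d"
  shows "two_step_decomp m d (map P ys)"
  unfolding two_step_decomp_def
proof (intro conjI ballI allI)
  fix p assume p: "p \<in> set (map P ys)"
  then show "p \<in> zvec m" "l1norm m p = 2" using assms(1) by (auto simp: consistent_two_steps_def)
  show "conf_le p d"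
    using conf_le_sum_list[of "map P ys" p] assms p by (simp add: consistent_two_steps_def)
next
  fix i show "d i = (\<Sum>k<length (map P ys). (map P ys ! k) i)"
    using assms(2) by (auto simp: sum_list_sum_nth sum_apply atLeast0LessThan)
qed

definition sign_compatible :: "(nat \<Rightarrow> int) \<Rightarrow> (nat \<Rightarrow> int) \<Rightarrow> bool" where
  "sign_compatible u y \<longleftrightarrow> (\<forall>j. (0 \<le> u j \<longrightarrow> 0 \<le> y j) \<and> (u j \<le> 0 \<longrightarrow> y j \<le> 0))"

lemma sign_compatible_add: "sign_compatible u a \<Longrightarrow> sign_compatible u b \<Longrightarrow> sign_compatible u (a + b)"
  by (auto simp: sign_compatible_def add_nonpos_nonpos)

lemma sign_compatible_zero: "sign_compatible u 0"
  by (simp add: sign_compatible_def)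

lemma sign_compatible_partial_sum_ge:
  assumes "\<forall>y\<in>set ys. sign_compatible u y" "sum_list ys = u" "I \<subseteq> {..<length ys}"
  shows "min 0 (u j) \<le> (\<Sum>k\<in>I. ys ! k) j"
proof (cases "0 \<le> u j")
  case True
  then have "\<forall>k\<in>I. 0 \<le> (ys ! k) j" using assms(1,3) by (auto simp: sign_compatible_def)
  then have "0 \<le> (\<Sum>k\<in>I. (ys ! k) j)" by (simp add: sum_nonneg)
  then show ?thesis by (simp add: sum_apply)
next
  case False
  then have nonpos: "\<forall>k<length ys. (ys ! k) j \<le> 0" using assms(1) by (auto simp: sign_compatible_def)
  have "u = (\<Sum>k\<in>{..<length ys} - I. ys ! k) + (\<Sum>k\<in>I. ys ! k)"
    using assms(2,3) by (simp add: sum_list_sum_nth atLeast0LessThan sum.subset_diff)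
  then have "u j = (\<Sum>k\<in>{..<length ys} - I. (ys ! k) j) + (\<Sum>k\<in>I. (ys ! k) j)"
    by (simp add: sum_apply)
  moreover have "(\<Sum>k\<in>{..<length ys} - I. (ys ! k) j) \<le> 0"
    using nonpos by (intro sum_nonpos) auto
  ultimately show ?thesis by (simp add: sum_apply)
qed

definition mat_vec :: "nat \<Rightarrow> nat \<Rightarrow> (nat \<Rightarrow> nat \<Rightarrow> int) \<Rightarrow> (nat \<Rightarrow> int) \<Rightarrow> nat \<Rightarrow> int" where
  "mat_vec m n M x = (\<lambda>i. if i < m then \<Sum>j<n. M i j * x j else 0)"

lemma mat_vec_in_zvec: "mat_vec m n M x \<in> zvec m"
  by (simp add: mat_vec_def zvec_def)

lemma mat_vec_add: "mat_vec m n M (x + y) = mat_vec m n M x + mat_vec m n M y"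
  by (simp add: mat_vec_def fun_eq_iff distrib_left sum.distrib)

lemma mat_vec_zero: "mat_vec m n M 0 = 0"
  by (simp add: mat_vec_def fun_eq_iff)

lemma mat_vec_sum: "mat_vec m n M (sum f I) = (\<Sum>k\<in>I. mat_vec m n M (f k))"
  using sum_comp_morphism[of "mat_vec m n M" f I] by (simp add: mat_vec_add mat_vec_zero o_def)

lemma mat_vec_sum_list: "mat_vec m n M (sum_list xs) = sum_list (map (mat_vec m n M) xs)"
  by (induction xs) (simp_all only: sum_list.Nil sum_list.Cons list.map mat_vec_add mat_vec_zero)

lemma feasible_iff_mat_vec:
  assumes "z \<in> zvec m"
  shows "x \<in> feasible m n M z \<longleftrightarrow> (\<forall>j<n. 0 \<le> x j) \<and> (\<forall>j\<ge>n. x j = 0) \<and> mat_vec m n M x = z"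
  using assms by (auto simp: feasible_def mat_vec_def zvec_def)

definition unit_step :: "(nat \<Rightarrow> int) \<Rightarrow> nat \<Rightarrow> nat \<Rightarrow> int" where
  "unit_step u j = (\<lambda>k. if k = j then sgn (u j) else 0)"

fun unit_steps :: "(nat \<Rightarrow> int) \<Rightarrow> nat \<Rightarrow> (nat \<Rightarrow> int) list" where
  "unit_steps u 0 = []"
| "unit_steps u (Suc j) = unit_steps u j @ replicate (nat \<bar>u j\<bar>) (unit_step u j)"

lemma sum_list_unit_steps: "sum_list (unit_steps u n) = (\<lambda>k. if k < n then u k else 0)"
proof (induction n)
  case (Suc n)
  have "of_nat (nat \<bar>u n\<bar>) * sgn (u n) = u n" by (simp add: abs_mult_sgn)
  then show ?case
    using Suc by (auto simp: fun_eq_iff unit_step_def sum_list_replicate less_Suc_eq simp del: of_nat_nat)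
qed (simp add: fun_eq_iff)

lemma set_unit_steps: "s \<in> set (unit_steps u n) \<Longrightarrow> \<exists>j<n. u j \<noteq> 0 \<and> s = unit_step u j"
  by (induction n) (auto simp: less_Suc_eq)

lemma sign_compatible_unit_step: "sign_compatible u (unit_step u j)"
  by (simp add: sign_compatible_def unit_step_def sgn_if)

lemma mat_vec_unit_step:
  "j < n \<Longrightarrow> mat_vec m n M (unit_step u j) = (\<lambda>i. if i < m then sgn (u j) * M i j else 0)"
  by (simp add: mat_vec_def unit_step_def mult.commute if_distrib cong: if_cong)

lemma l1norm_mat_vec_unit_step:
  assumes G: "simple_graph_incidence m n M" and j: "j < n" and u: "u j \<noteq> 0"
  shows "l1norm m (mat_vec m n M (unit_step u j)) = 2"
proof -
  have "l1norm m (mat_vec m n M (unit_step u j)) = (\<Sum>i<m. \<bar>M i j\<bar>)"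
    using j u by (simp add: l1norm_def mat_vec_unit_step abs_mult abs_sgn_eq)
  also have "\<dots> = (\<Sum>i\<in>{i. i < m \<and> M i j = 1}. 1)"
    using G j unfolding simple_graph_incidence_def
    by (intro sum.mono_neutral_cong_right) auto
  also have "\<dots> = 2"
    using G j by (simp add: simple_graph_incidence_def)
  finally show ?thesis .
qed

lemma feasible_entry_le:
  assumes G: "simple_graph_incidence m n M" and x: "x \<in> feasible m n M z" and j: "j < n"
  shows "x j \<le> (\<Sum>i<m. \<bar>z i\<bar>)"
proof -
  have "card {i. i < m \<and> M i j = 1} = 2" using G j by (simp add: simple_graph_incidence_def)
  then obtain i where i: "i < m" "M i j = 1" by (metis (mono_tags) Collect_empty_eq card.empty zero_neq_numeral)
  have "\<forall>j'\<in>{..<n}. 0 \<le> M i j' * x j'"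
    using G x i(1) by (auto simp: simple_graph_incidence_def feasible_def) (metis mult_nonneg_nonneg order_refl zero_le_one)
  then have "M i j * x j \<le> (\<Sum>j'<n. M i j' * x j')"
    using j by (intro member_le_sum) auto
  also have "\<dots> = z i" using x i(1) by (simp add: feasible_def)
  also have "\<dots> \<le> \<bar>z i\<bar>" by simp
  also have "\<dots> \<le> (\<Sum>i<m. \<bar>z i\<bar>)"
    using i(1) by (intro member_le_sum) auto
  finally show ?thesis using i(2) by simp
qed

lemma finite_feasible:
  assumes "simple_graph_incidence m n M"
  shows "finite (feasible m n M z)"
proof (rule finite_subset)
  let ?B = "(\<Sum>i<m. \<bar>z i\<bar>)"
  show "feasible m n M z \<subseteq> {x. \<forall>j. (j \<in> {..<n} \<longrightarrow> x j \<in> {0..?B}) \<and> (j \<notin> {..<n} \<longrightarrow> x j = 0)}"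
    using feasible_entry_le[OF assms] by (auto simp: feasible_def)
  show "finite \<dots>" by (intro finite_set_of_finite_funs) auto
qed

lemma fcM_eq_Min:
  assumes "feasible m n M z \<noteq> {}"
  shows "fcM m n c M z = ereal (real_of_int (MIN x\<in>feasible m n M z. \<Sum>j<n. c j * x j))"
  using assms by (simp add: fcM_def Let_def)

lemma fcM_le_cost:
  assumes "simple_graph_incidence m n M" and "x \<in> feasible m n M z"
  shows "fcM m n c M z \<le> ereal (real_of_int (\<Sum>j<n. c j * x j))"
proof -
  have "(MIN x\<in>feasible m n M z. \<Sum>j<n. c j * x j) \<le> (\<Sum>j<n. c j * x j)"
    using finite_feasible[OF assms(1)] assms(2) by (intro Min_le) auto
  then have "ereal (real_of_int (MIN x\<in>feasible m n M z. \<Sum>j<n. c j * x j))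
      \<le> ereal (real_of_int (\<Sum>j<n. c j * x j))"
    by (simp only: ereal_less_eq(3) of_int_le_iff)
  moreover have "fcM m n c M z = ereal (real_of_int (MIN x\<in>feasible m n M z. \<Sum>j<n. c j * x j))"
    using assms(2) by (intro fcM_eq_Min) blast
  ultimately show ?thesis by (simp only:)
qed

lemma fcM_attained:
  assumes "simple_graph_incidence m n M" and "fcM m n c M z < \<infinity>"
  obtains x where "x \<in> feasible m n M z" "fcM m n c M z = ereal (real_of_int (\<Sum>j<n. c j * x j))"
proof -
  have "feasible m n M z \<noteq> {}" using assms(2) by (auto simp: fcM_def)
  then have "(MIN x\<in>feasible m n M z. \<Sum>j<n. c j * x j) \<in> (\<lambda>x. \<Sum>j<n. c j * x j) ` feasible m n M z"
    using finite_feasible[OF assms(1)] by (intro Min_in) auto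
  then show ?thesis using that fcM_eq_Min[OF \<open>feasible m n M z \<noteq> {}\<close>, of c] by force
qed

lemma mat_vec_diff_feasible:
  assumes "z1 \<in> zvec m" "z2 \<in> zvec m" "x1 \<in> feasible m n M z1" "x2 \<in> feasible m n M z2"
  shows "mat_vec m n M (x2 - x1) = z2 - z1"
proof -
  have "mat_vec m n M x2 = mat_vec m n M x1 + mat_vec m n M (x2 - x1)"
    by (simp flip: mat_vec_add)
  then show ?thesis using assms by (simp add: feasible_iff_mat_vec) (metis add_diff_cancel_left')
qed

lemma feasible_add_partial_sum:
  assumes z1: "z1 \<in> zvec m" and x1: "x1 \<in> feasible m n M z1" and x2: "x2 \<in> feasible m n M z2"
    and ys: "\<forall>y\<in>set ys. sign_compatible (x2 - x1) y" "sum_list ys = x2 - x1"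
    and I: "I \<subseteq> {..<length ys}"
  shows "x1 + (\<Sum>k\<in>I. ys ! k) \<in> feasible m n M (z1 + (\<Sum>k\<in>I. mat_vec m n M (ys ! k)))"
proof -
  let ?x = "x1 + (\<Sum>k\<in>I. ys ! k)"
  have "mat_vec m n M ?x = z1 + (\<Sum>k\<in>I. mat_vec m n M (ys ! k))"
    using x1 z1 by (simp add: mat_vec_add mat_vec_sum feasible_iff_mat_vec)
  moreover have "0 \<le> ?x j" if "j < n" for j
  proof -
    have "0 \<le> x1 j" "0 \<le> x1 j + (x2 - x1) j"
      using x1 x2 that by (simp_all add: feasible_def)
    moreover have "min 0 ((x2 - x1) j) \<le> (\<Sum>k\<in>I. ys ! k) j"
      using ys I by (rule sign_compatible_partial_sum_ge)
    ultimately show ?thesis by simp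
  qed
  moreover have "?x j = 0" if "n \<le> j" for j
  proof -
    have "(x2 - x1) j = 0" "x1 j = 0" using x1 x2 that by (simp_all add: feasible_def)
    moreover have "ys ! k \<in> set ys" if "k \<in> I" for k using I that by auto
    ultimately have "\<forall>k\<in>I. (ys ! k) j = 0"
      using ys(1) unfolding sign_compatible_def by (metis order_antisym order_refl)
    then show ?thesis using \<open>x1 j = 0\<close> by (simp add: sum_apply)
  qed
  ultimately show ?thesis
    by (simp add: feasible_iff_mat_vec mat_vec_in_zvec flip: \<open>mat_vec m n M ?x = _\<close>)
qed

lemma linear_cost_add_sum:
  fixes c :: "nat \<Rightarrow> 'a::comm_semiring_1"
  shows "(\<Sum>j<n. c j * (x + sum f I) j) = (\<Sum>j<n. c j * x j) + (\<Sum>k\<in>I. \<Sum>j<n. c j * f k j)"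
  by (simp add: sum_apply sum.distrib distrib_left sum_distrib_left sum.swap[of _ I])

lemma sbo_exchange_from_consistent_two_steps:
  assumes G: "simple_graph_incidence m n M" and z: "z1 \<in> zvec m" "z2 \<in> zvec m"
    and x1: "x1 \<in> feasible m n M z1" "fcM m n c M z1 = ereal (real_of_int (\<Sum>j<n. c j * x1 j))"
    and x2: "x2 \<in> feasible m n M z2" "fcM m n c M z2 = ereal (real_of_int (\<Sum>j<n. c j * x2 j))"
    and ys: "consistent_two_steps m (mat_vec m n M) ys" "\<forall>y\<in>set ys. sign_compatible (x2 - x1) y"
      "sum_list ys = x2 - x1"
  shows "\<exists>ps gs. two_step_decomp m (\<lambda>i. z2 i - z1 i) ps \<and> length gs = length ps \<and>
      fcM m n c M z2 = fcM m n c M z1 + ereal (\<Sum>k<length ps. gs ! k) \<and>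
      (\<forall>I\<subseteq>{..<length ps}. fcM m n c M (\<lambda>i. z1 i + (\<Sum>k\<in>I. (ps ! k) i))
         \<le> fcM m n c M z1 + ereal (\<Sum>k\<in>I. gs ! k))"
proof (intro exI conjI)
  let ?ps = "map (mat_vec m n M) ys" and ?gs = "map (\<lambda>y. real_of_int (\<Sum>j<n. c j * y j)) ys"
  have cost_partial: "real_of_int (\<Sum>j<n. c j * (x1 + (\<Sum>k\<in>I. ys ! k)) j)
      = real_of_int (\<Sum>j<n. c j * x1 j) + (\<Sum>k\<in>I. ?gs ! k)"
    if "I \<subseteq> {..<length ys}" for I
  proof -
    have "(\<Sum>k\<in>I. ?gs ! k) = real_of_int (\<Sum>k\<in>I. \<Sum>j<n. c j * (ys ! k) j)"
      using that by (auto simp: subset_eq intro!: sum.cong)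
    then show ?thesis by (simp only: linear_cost_add_sum of_int_add)
  qed
  have partial_sum: "(\<lambda>i. z1 i + (\<Sum>k\<in>I. (?ps ! k) i)) = z1 + (\<Sum>k\<in>I. mat_vec m n M (ys ! k))"
    if "I \<subseteq> {..<length ys}" for I
    using that by (auto simp: fun_eq_iff sum_apply intro!: sum.cong)
  have "sum_list ?ps = (\<lambda>i. z2 i - z1 i)"
    using mat_vec_diff_feasible[OF z x1(1) x2(1)] by (simp add: fun_eq_iff ys(3) flip: mat_vec_sum_list)
  with ys(1) show "two_step_decomp m (\<lambda>i. z2 i - z1 i) ?ps"
    by (rule two_step_decomp_map)
  show "length ?gs = length ?ps" by simp
  have "x1 + (\<Sum>k<length ys. ys ! k) = x2"
    using ys(3) by (simp add: sum_list_sum_nth atLeast0LessThan)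
  then have "fcM m n c M z2 = ereal (real_of_int (\<Sum>j<n. c j * (x1 + (\<Sum>k<length ys. ys ! k)) j))"
    using x2(2) by simp
  also have "\<dots> = fcM m n c M z1 + ereal (\<Sum>k<length ?ps. ?gs ! k)"
    using x1(2) cost_partial[of "{..<length ys}"] by simp
  finally show "fcM m n c M z2 = fcM m n c M z1 + ereal (\<Sum>k<length ?ps. ?gs ! k)" .
  show "\<forall>I\<subseteq>{..<length ?ps}. fcM m n c M (\<lambda>i. z1 i + (\<Sum>k\<in>I. (?ps ! k) i))
      \<le> fcM m n c M z1 + ereal (\<Sum>k\<in>I. ?gs ! k)"
  proof (intro allI impI)
    fix I assume I: "I \<subseteq> {..<length ?ps}"
    then have "x1 + (\<Sum>k\<in>I. ys ! k) \<in> feasible m n M (\<lambda>i. z1 i + (\<Sum>k\<in>I. (?ps ! k) i))"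
      using feasible_add_partial_sum[OF z(1) x1(1) x2(1) ys(2,3)] partial_sum by simp
    then have "fcM m n c M (\<lambda>i. z1 i + (\<Sum>k\<in>I. (?ps ! k) i))
        \<le> ereal (real_of_int (\<Sum>j<n. c j * (x1 + (\<Sum>k\<in>I. ys ! k)) j))"
      by (rule fcM_le_cost[OF G])
    also have "\<dots> = fcM m n c M z1 + ereal (\<Sum>k\<in>I. ?gs ! k)"
      using x1(2) I cost_partial by simp
    finally show "fcM m n c M (\<lambda>i. z1 i + (\<Sum>k\<in>I. (?ps ! k) i))
        \<le> fcM m n c M z1 + ereal (\<Sum>k\<in>I. ?gs ! k)" .
  qed
qed

lemma consistent_two_step_decomposition:
  assumes G: "simple_graph_incidence m n M" and u: "\<forall>j\<ge>n. u j = 0"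
  obtains (decomposed) ys where "consistent_two_steps m (mat_vec m n M) ys"
      "\<forall>y\<in>set ys. sign_compatible u y" "sum_list ys = u"
    | (balanced) "mat_vec m n M u = 0"
proof -
  have steps: "\<forall>s\<in>set (unit_steps u n). sign_compatible u s \<and> mat_vec m n M s \<in> zvec m \<and>
      l1norm m (mat_vec m n M s) = 2"
    using set_unit_steps sign_compatible_unit_step mat_vec_in_zvec l1norm_mat_vec_unit_step[OF G]
    by blast
  obtain rs w where rs: "consistent_two_steps m (mat_vec m n M) rs" "\<forall>r\<in>set rs. sign_compatible u r"
    and w: "sign_compatible u w" "mat_vec m n M w = 0"
    and sum_steps: "sum_list rs + w = sum_list (unit_steps u n)"
    using sign_compatible_add sign_compatible_zero mat_vec_add steps
    by (rule regroup_into_consistent_two_steps[where Q = "sign_compatible u" and P = "mat_vec m n M"])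
  have sum: "sum_list rs + w = u"
    using sum_steps u by (auto simp: sum_list_unit_steps fun_eq_iff)
  show ?thesis
  proof (cases rs)
    case Nil
    then show ?thesis using sum w(2) balanced by simp
  next
    case (Cons r rs')
    \<comment> \<open>\<open>w\<close> has zero image, so it can be absorbed into any step\<close>
    have "consistent_two_steps m (mat_vec m n M) ((r + w) # rs')"
      using rs(1) Cons w(2) by (simp add: consistent_two_steps_def mat_vec_add)
    moreover have "\<forall>y\<in>set ((r + w) # rs'). sign_compatible u y"
      using rs(2) Cons w(1) sign_compatible_add by auto
    moreover have "sum_list ((r + w) # rs') = u"
      using sum Cons by (simp add: ac_simps)
    ultimately show ?thesis by (rule decomposed)
  qed
qed

lemma fcM_sbo_exchange:
  assumes G: "simple_graph_incidence m n M" and z: "z1 \<in> zvec m" "z2 \<in> zvec m"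
    and finite: "fcM m n c M z1 < \<infinity>" "fcM m n c M z2 < \<infinity>"
  shows "\<exists>ps gs. two_step_decomp m (\<lambda>i. z2 i - z1 i) ps \<and> length gs = length ps \<and>
      fcM m n c M z2 = fcM m n c M z1 + ereal (\<Sum>k<length ps. gs ! k) \<and>
      (\<forall>I\<subseteq>{..<length ps}. fcM m n c M (\<lambda>i. z1 i + (\<Sum>k\<in>I. (ps ! k) i))
         \<le> fcM m n c M z1 + ereal (\<Sum>k\<in>I. gs ! k))"
proof -
  obtain x1 where x1: "x1 \<in> feasible m n M z1" "fcM m n c M z1 = ereal (real_of_int (\<Sum>j<n. c j * x1 j))"
    by (rule fcM_attained[OF G finite(1)])
  obtain x2 where x2: "x2 \<in> feasible m n M z2" "fcM m n c M z2 = ereal (real_of_int (\<Sum>j<n. c j * x2 j))"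
    by (rule fcM_attained[OF G finite(2)])
  have "\<forall>j\<ge>n. (x2 - x1) j = 0" using x1(1) x2(1) by (simp add: feasible_def)
  with G show ?thesis
  proof (cases rule: consistent_two_step_decomposition[where u = "x2 - x1"])
    case (decomposed ys)
    then show ?thesis using sbo_exchange_from_consistent_two_steps[OF G z x1 x2] by blast
  next
    case balanced
    then have "z2 = z1" using mat_vec_diff_feasible[OF z x1(1) x2(1)] by simp
    then show ?thesis
      using sbo_exchange_from_consistent_two_steps[OF G z(1) z(1) x1 x1, of "[]"]
      by (simp add: consistent_two_steps_def)
  qed
qed

theorem proposition17:
  fixes m n :: nat and M :: "nat \<Rightarrow> nat \<Rightarrow> int" and c :: "nat \<Rightarrow> int"
  assumes "simple_graph_incidence m n M"
  shows "sbo_jump_mconvex m (\<lambda>z. fcM m n c M z)"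
  using fcM_sbo_exchange[OF assms] unfolding sbo_jump_mconvex_def by blast

end
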